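(* Let $n,t_1,t_2$ be positive integers with $t_1\ge t_2$. Then $$R(C_{t_1},Q_n)=n+t_1-1\qquad\text{and}\qquad R(\mathcal{C}_{t_1,t_2},Q_n)=n+t_1+1.$$
   Context: $C_t$ denotes a chain (totally ordered poset) on $t$ elements. The parallel composition $P_1+P_2$ of posets is the disjoint union of a copy of $P_1$ and a copy of $P_2$ in which every element of one is incomparable to every element of the other. The chain composition is $\mathcal{C}_{t_1,\dots,t_\ell}=C_{t_1}+\dots+C_{t_\ell}$ with $t_1\ge\dots\ge t_\ell$. $Q_n$ is the Boolean lattice of all subsets of an $n$-element set ordered by inclusion. A copy of a poset $P$ in $Q$ is an induced subposet of $Q$ isomorphic to $P$. $R(P_1,P_2)$ is the smallest integer $N$ such that every blue/red coloring of the elements of $Q_N$ contains an all-blue copy of $P_1$ or an all-red copy of $P_2$. *)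

theory Defs
  imports Main
begin

type_synonym 'a poset = "'a set \<times> ('a \<Rightarrow> 'a \<Rightarrow> bool)"

definition has_copy :: "'a poset \<Rightarrow> 'b set \<Rightarrow> ('b \<Rightarrow> 'b \<Rightarrow> bool) \<Rightarrow> bool" where
  "has_copy P H le' \<longleftrightarrow>
     (\<exists>f. inj_on f (fst P) \<and> f ` fst P \<subseteq> H \<and>
          (\<forall>x\<in>fst P. \<forall>y\<in>fst P. snd P x y \<longleftrightarrow> le' (f x) (f y)))"

definition boolean_lattice :: "nat \<Rightarrow> nat set poset" ("Q") where
  "Q n = (Pow {..<n}, (\<subseteq>))"

definition chain_poset :: "nat \<Rightarrow> nat poset" ("C") where
  "C t = ({..<t}, (\<le>))"

definition parallel :: "'a poset \<Rightarrow> 'b poset \<Rightarrow> ('a + 'b) poset" where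
  "parallel P1 P2 = (Inl ` fst P1 \<union> Inr ` fst P2,
     (\<lambda>u v. case (u, v) of
        (Inl a, Inl b) \<Rightarrow> snd P1 a b
      | (Inr a, Inr b) \<Rightarrow> snd P2 a b
      | _ \<Rightarrow> False))"

text \<open>Ramsey property: every blue/red colouring (True = blue) of Q_N contains
  an all-blue copy of P1 or an all-red copy of P2.\<close>
definition ramsey_prop :: "'a poset \<Rightarrow> 'b poset \<Rightarrow> nat \<Rightarrow> bool" where
  "ramsey_prop P1 P2 N \<longleftrightarrow>
     (\<forall>col :: nat set \<Rightarrow> bool.
        has_copy P1 {S \<in> fst (Q N). col S} (snd (Q N)) \<or>
        has_copy P2 {S \<in> fst (Q N). \<not> col S} (snd (Q N)))"

definition poset_ramsey :: "'a poset \<Rightarrow> 'b poset \<Rightarrow> nat" where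
  "poset_ramsey P1 P2 = (LEAST N. ramsey_prop P1 P2 N)"

end

theory Submission
  imports Defs
begin

text \<open>
  Upper bound for a chain. Write the ground set of \<open>Q\<^sub>n\<^sub>+\<^sub>k\<close> as \<open>[n]\<close> together with \<open>k\<close> new
  points \<open>n, \<dots>, n + k - 1\<close>, and for \<open>S \<subseteq> [n]\<close> let \<open>h(S)\<close> be the least \<open>i\<close> such that the blue
  subsets of \<open>S \<union> {n, \<dots>, n + i - 1}\<close> contain no chain of length \<open>i + 1\<close>. Without a blue
  \<open>C\<^sub>k\<^sub>+\<^sub>1\<close> we have \<open>h(S) \<le> k\<close>; minimality forces \<open>S \<union> {n, \<dots>, n + h(S) - 1}\<close> to be red, since
  otherwise it would extend the blue chain of length \<open>h(S)\<close> below it; and \<open>h\<close> is monotone. So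
  \<open>S \<mapsto> S \<union> {n, \<dots>, n + h(S) - 1}\<close> embeds \<open>Q\<^sub>n\<close> into the red sets.

  Upper bound for \<open>C\<^sub>t\<^sub>1 + C\<^sub>t\<^sub>2\<close>: apply this inside \<open>Q\<^sub>n\<^sub>+\<^sub>t\<^sub>1\<^sub>-\<^sub>1\<close> to the colourings
  \<open>X \<mapsto> col(X \<union> {a})\<close> and \<open>X \<mapsto> col(X \<union> {b})\<close> for two further points \<open>a, b\<close>; sets containing \<open>a\<close>
  but not \<open>b\<close> are incomparable with sets containing \<open>b\<close> but not \<open>a\<close>.

  Lower bounds: colour by the size of the set. A chain meets every level at most once, and a
  copy of \<open>Q\<^sub>n\<close> contains a chain of length \<open>n + 1\<close>. For \<open>C\<^sub>t\<^sub>1 + C\<^sub>t\<^sub>2\<close> the sets of the long chain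
  are incomparable with some other set, so they avoid both \<open>\<emptyset>\<close> and the whole ground set.
\<close>

lemma has_copyI:
  assumes "inj_on f (fst P)" and "f ` fst P \<subseteq> H"
    and "\<And>x y. x \<in> fst P \<Longrightarrow> y \<in> fst P \<Longrightarrow> snd P x y \<longleftrightarrow> le (f x) (f y)"
  shows "has_copy P H le"
  unfolding has_copy_def using assms by (intro exI[of _ f]) simp

lemma has_copyE:
  assumes "has_copy P H le"
  obtains f where "inj_on f (fst P)" and "f ` fst P \<subseteq> H"
    and "\<forall>x\<in>fst P. \<forall>y\<in>fst P. snd P x y \<longleftrightarrow> le (f x) (f y)"
  using assms unfolding has_copy_def by blast

lemma has_copy_mono:
  "has_copy P H le \<Longrightarrow> H \<subseteq> H' \<Longrightarrow> has_copy P H' le"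
  unfolding has_copy_def by (meson order_trans)

lemma has_copy_trans:
  assumes "has_copy P (fst P') (snd P')" and "has_copy P' H le"
  shows "has_copy P H le"
proof -
  obtain f where f: "inj_on f (fst P)" "f ` fst P \<subseteq> fst P'"
    "\<forall>x\<in>fst P. \<forall>y\<in>fst P. snd P x y \<longleftrightarrow> snd P' (f x) (f y)"
    using assms(1) by (rule has_copyE)
  obtain g where g: "inj_on g (fst P')" "g ` fst P' \<subseteq> H"
    "\<forall>x\<in>fst P'. \<forall>y\<in>fst P'. snd P' x y \<longleftrightarrow> le (g x) (g y)"
    using assms(2) by (rule has_copyE)
  show ?thesis
  proof (rule has_copyI[of "g \<circ> f"])
    show "inj_on (g \<circ> f) (fst P)"
      using f(1,2) g(1) by (simp add: comp_inj_on inj_on_subset)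
    show "(g \<circ> f) ` fst P \<subseteq> H"
      using f(2) g(2) by auto
    show "snd P x y \<longleftrightarrow> le ((g \<circ> f) x) ((g \<circ> f) y)" if "x \<in> fst P" "y \<in> fst P" for x y
      using f(2,3) g(3) that by (simp add: image_subset_iff)
  qed
qed

lemma has_copy_image:
  assumes "has_copy P H le"
    and "\<And>x y. x \<in> H \<Longrightarrow> y \<in> H \<Longrightarrow> le x y \<longleftrightarrow> le' (g x) (g y)"
    and "inj_on g H"
  shows "has_copy P (g ` H) le'"
proof (rule has_copy_trans)
  show "has_copy P (fst (H, le)) (snd (H, le))"
    using assms(1) by simp
  show "has_copy (H, le) (g ` H) le'"
    using assms(2,3) by (intro has_copyI) auto
qed

lemma has_copy_insert:
  assumes "has_copy P H (\<subseteq>)" and "\<forall>S\<in>H. a \<notin> S"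
  shows "has_copy P (insert a ` H) (\<subseteq>)"
proof (rule has_copy_image[OF assms(1)])
  show "S \<subseteq> T \<longleftrightarrow> insert a S \<subseteq> insert a T" if "S \<in> H" "T \<in> H" for S T
    using assms(2) that by (simp add: subset_insert)
  show "inj_on (insert a) H"
    using assms(2) by (simp add: inj_on_def insert_ident)
qed

lemma has_copy_chain_iff:
  fixes H :: "'b::order set"
  shows "has_copy (C t) H (\<le>) \<longleftrightarrow> (\<exists>c. c ` {..<t} \<subseteq> H \<and> strict_mono_on {..<t} c)"
proof
  assume "has_copy (C t) H (\<le>)"
  then obtain c where c: "inj_on c {..<t}" "c ` {..<t} \<subseteq> H"
    "\<forall>i<t. \<forall>j<t. i \<le> j \<longleftrightarrow> c i \<le> c j"
    unfolding has_copy_def chain_poset_def by auto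
  have "strict_mono_on {..<t} c"
    by (rule strict_mono_onI) (use c(1,3) in \<open>auto simp: order_less_le inj_on_eq_iff\<close>)
  with c(2) show "\<exists>c. c ` {..<t} \<subseteq> H \<and> strict_mono_on {..<t} c" by blast
next
  assume "\<exists>c. c ` {..<t} \<subseteq> H \<and> strict_mono_on {..<t} c"
  then obtain c where c: "c ` {..<t} \<subseteq> H" "strict_mono_on {..<t} c" by blast
  then show "has_copy (C t) H (\<le>)"
    unfolding has_copy_def chain_poset_def
    by (intro exI[of _ c]) (auto simp: strict_mono_on_imp_inj_on strict_mono_on_less_eq)
qed

lemma has_copy_chain_le:
  assumes "has_copy (C k) H le" and "k' \<le> k"
  shows "has_copy (C k') H le"
proof -
  obtain f where f: "inj_on f {..<k}" "f ` {..<k} \<subseteq> H" "\<forall>i<k. \<forall>j<k. i \<le> j \<longleftrightarrow> le (f i) (f j)"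
    using assms(1) unfolding has_copy_def chain_poset_def by auto
  have "{..<k'} \<subseteq> {..<k}" using assms(2) by auto
  with f show ?thesis
    unfolding has_copy_def chain_poset_def by (intro exI[of _ f]) (auto intro: inj_on_subset)
qed

lemma has_copy_chain_Suc:
  fixes H :: "'b::order set"
  assumes "has_copy (C k) H (\<le>)" and "\<forall>x\<in>H. x < w"
  shows "has_copy (C (Suc k)) (insert w H) (\<le>)"
proof -
  obtain c where c: "c ` {..<k} \<subseteq> H" "strict_mono_on {..<k} c"
    using assms(1) by (auto simp: has_copy_chain_iff)
  have "strict_mono_on {..<Suc k} (c(k := w))"
  proof (rule strict_mono_onI)
    fix i j assume "i \<in> {..<Suc k}" "j \<in> {..<Suc k}" "i < j"
    then show "(c(k := w)) i < (c(k := w)) j"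
      using c assms(2) strict_mono_onD[OF c(2)] by (cases "j = k") auto
  qed
  moreover have "(c(k := w)) ` {..<Suc k} \<subseteq> insert w H"
    using c(1) by (auto simp: lessThan_Suc)
  ultimately show ?thesis unfolding has_copy_chain_iff by blast
qed

lemma has_copy_boolean_latticeI:
  assumes "f ` Pow {..<n} \<subseteq> H"
    and "\<And>S T. S \<subseteq> {..<n} \<Longrightarrow> T \<subseteq> {..<n} \<Longrightarrow> S \<subseteq> T \<longleftrightarrow> f S \<subseteq> f T"
  shows "has_copy (Q n) H (\<subseteq>)"
  using assms by (intro has_copyI) (auto intro!: inj_onI simp: boolean_lattice_def subset_antisym)

lemma has_copy_chain_boolean_lattice: "has_copy (C (Suc n)) (fst (Q n)) (snd (Q n))"
proof -
  have "strict_mono_on {..<Suc n} (\<lambda>i. {..<i})"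
    by (rule strict_mono_onI) auto
  then show ?thesis
    unfolding boolean_lattice_def by (auto simp: has_copy_chain_iff intro!: exI[of _ "\<lambda>i. {..<i}"])
qed

lemma has_copy_boolean_lattice_chain:
  "has_copy (Q n) H (\<subseteq>) \<Longrightarrow> has_copy (C (Suc n)) H (\<subseteq>)"
  by (rule has_copy_trans[OF has_copy_chain_boolean_lattice])

lemma has_copy_chain_card_le:
  assumes "has_copy (C k) H (\<subseteq>)" and "\<forall>S\<in>H. finite S \<and> card S \<in> R" and "finite R"
  shows "k \<le> card R"
proof -
  obtain c where c: "c ` {..<k} \<subseteq> H" "strict_mono_on {..<k} c"
    using assms(1) by (auto simp: has_copy_chain_iff)
  have "strict_mono_on {..<k} (card \<circ> c)"
    using c assms(2) by (intro strict_mono_onI) (auto simp: psubset_card_mono strict_mono_onD)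
  then have "card ((card \<circ> c) ` {..<k}) = k"
    using card_image[OF strict_mono_on_imp_inj_on] by fastforce
  moreover have "(card \<circ> c) ` {..<k} \<subseteq> R"
    using c(1) assms(2) by auto
  ultimately show ?thesis
    using assms(3) card_mono by metis
qed

lemma fst_parallel: "fst (parallel P1 P2) = Inl ` fst P1 \<union> Inr ` fst P2"
  by (simp add: parallel_def)

lemma snd_parallel_simps [simp]:
  "snd (parallel P1 P2) (Inl a) (Inl a') = snd P1 a a'"
  "snd (parallel P1 P2) (Inr b) (Inr b') = snd P2 b b'"
  "snd (parallel P1 P2) (Inl a) (Inr b) = False"
  "snd (parallel P1 P2) (Inr b) (Inl a) = False"
  by (simp_all add: parallel_def)

lemma parallel_carrierE:
  assumes "u \<in> fst (parallel P1 P2)"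
  obtains (Inl) a where "u = Inl a" "a \<in> fst P1" | (Inr) b where "u = Inr b" "b \<in> fst P2"
  using assms by (auto simp: fst_parallel)

lemma has_copy_parallel:
  fixes H1 H2 :: "'b::order set"
  assumes "has_copy P1 H1 (\<le>)" and "has_copy P2 H2 (\<le>)"
    and "\<And>x y. x \<in> H1 \<Longrightarrow> y \<in> H2 \<Longrightarrow> \<not> x \<le> y \<and> \<not> y \<le> x"
  shows "has_copy (parallel P1 P2) (H1 \<union> H2) (\<le>)"
proof -
  obtain f1 where f1: "inj_on f1 (fst P1)" "f1 ` fst P1 \<subseteq> H1"
    "\<forall>x\<in>fst P1. \<forall>y\<in>fst P1. snd P1 x y \<longleftrightarrow> f1 x \<le> f1 y"
    using assms(1) by (rule has_copyE)
  obtain f2 where f2: "inj_on f2 (fst P2)" "f2 ` fst P2 \<subseteq> H2"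
    "\<forall>x\<in>fst P2. \<forall>y\<in>fst P2. snd P2 x y \<longleftrightarrow> f2 x \<le> f2 y"
    using assms(2) by (rule has_copyE)
  define f where "f = case_sum f1 f2"
  have incomparable: "\<not> f1 a \<le> f2 b" "\<not> f2 b \<le> f1 a" if "a \<in> fst P1" "b \<in> fst P2" for a b
    using assms(3)[of "f1 a" "f2 b"] f1(2) f2(2) that by auto
  have order: "snd (parallel P1 P2) u v \<longleftrightarrow> f u \<le> f v"
    if "u \<in> fst (parallel P1 P2)" "v \<in> fst (parallel P1 P2)" for u v
    using that by (elim parallel_carrierE) (simp_all add: f_def f1(3) f2(3) incomparable)
  have "inj_on f (fst (parallel P1 P2))"
  proof (rule inj_onI)
    fix u v assume u: "u \<in> fst (parallel P1 P2)" and v: "v \<in> fst (parallel P1 P2)" and "f u = f v"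
    then have "snd (parallel P1 P2) u v"
      using order[OF u v] by simp
    with u v show "u = v"
      using \<open>f u = f v\<close> by (elim parallel_carrierE)
        (auto simp: f_def dest: inj_onD[OF f1(1)] inj_onD[OF f2(1)])
  qed
  moreover have "f ` fst (parallel P1 P2) \<subseteq> H1 \<union> H2"
    using f1(2) f2(2) by (auto simp: fst_parallel f_def)
  ultimately show ?thesis
    using order by (rule has_copyI)
qed

lemma has_copy_parallel_incomparable:
  assumes "has_copy (parallel P1 P2) H le" and "b \<in> fst P2"
  obtains z where "z \<in> H" and "has_copy P1 {x \<in> H. \<not> le x z \<and> \<not> le z x} le"
proof -
  obtain f where f: "inj_on f (fst (parallel P1 P2))" "f ` fst (parallel P1 P2) \<subseteq> H"
    "\<forall>u\<in>fst (parallel P1 P2). \<forall>v\<in>fst (parallel P1 P2). snd (parallel P1 P2) u v \<longleftrightarrow> le (f u) (f v)"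
    using assms(1) by (rule has_copyE)
  let ?z = "f (Inr b)"
  have Inr_b: "Inr b \<in> fst (parallel P1 P2)"
    using assms(2) by (simp add: fst_parallel)
  have Inl: "Inl a \<in> fst (parallel P1 P2)" if "a \<in> fst P1" for a
    using that by (simp add: fst_parallel)
  have "has_copy P1 {x \<in> H. \<not> le x ?z \<and> \<not> le ?z x} le"
  proof (rule has_copyI[of "f \<circ> Inl"])
    have "inj_on f (Inl ` fst P1)"
      using f(1) by (rule inj_on_subset) (simp add: fst_parallel)
    then show "inj_on (f \<circ> Inl) (fst P1)"
      by (simp add: comp_inj_on)
    show "(f \<circ> Inl) ` fst P1 \<subseteq> {x \<in> H. \<not> le x ?z \<and> \<not> le ?z x}"
    proof (rule image_subsetI)
      fix a assume a: "a \<in> fst P1"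
      show "(f \<circ> Inl) a \<in> {x \<in> H. \<not> le x ?z \<and> \<not> le ?z x}"
        using f(2) f(3)[rule_format, OF Inl[OF a] Inr_b] f(3)[rule_format, OF Inr_b Inl[OF a]] Inl[OF a]
        by auto
    qed
    show "snd P1 x y \<longleftrightarrow> le ((f \<circ> Inl) x) ((f \<circ> Inl) y)" if "x \<in> fst P1" "y \<in> fst P1" for x y
      using f(3)[rule_format, OF Inl[OF that(1)] Inl[OF that(2)]] by simp
  qed
  moreover have "?z \<in> H"
    using f(2) Inr_b by blast
  ultimately show thesis
    using that by blast
qed

lemma ramsey_prop_iff:
  "ramsey_prop P1 P2 N \<longleftrightarrow>
     (\<forall>col. has_copy P1 {S \<in> Pow {..<N}. col S} (\<subseteq>) \<or> has_copy P2 {S \<in> Pow {..<N}. \<not> col S} (\<subseteq>))"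
  by (simp add: ramsey_prop_def boolean_lattice_def)

lemma poset_ramsey_eqI:
  assumes "ramsey_prop P1 P2 N" and "\<And>M. M < N \<Longrightarrow> \<not> ramsey_prop P1 P2 M"
  shows "poset_ramsey P1 P2 = N"
  unfolding poset_ramsey_def using assms by (intro Least_equality) (auto simp: not_less[symmetric])

definition chain_free_level :: "(nat set \<Rightarrow> bool) \<Rightarrow> nat \<Rightarrow> nat set \<Rightarrow> nat" where
  "chain_free_level col n S =
     (LEAST i. \<not> has_copy (C (Suc i)) {X \<in> Pow (S \<union> {n..<n + i}). col X} (\<subseteq>))"

context
  fixes col :: "nat set \<Rightarrow> bool" and n i :: nat and S :: "nat set"
  assumes chain_free: "\<not> has_copy (C (Suc i)) {X \<in> Pow (S \<union> {n..<n + i}). col X} (\<subseteq>)"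
begin

lemma chain_free_level_le: "chain_free_level col n S \<le> i"
  unfolding chain_free_level_def using chain_free by (rule Least_le)

lemma chain_free_at_chain_free_level:
  "\<not> has_copy (C (Suc (chain_free_level col n S)))
      {X \<in> Pow (S \<union> {n..<n + chain_free_level col n S}). col X} (\<subseteq>)"
  unfolding chain_free_level_def using chain_free by (rule LeastI)

lemma chain_free_level_mono:
  assumes "R \<subseteq> S"
  shows "chain_free_level col n R \<le> chain_free_level col n S"
proof -
  let ?l = "chain_free_level col n S"
  have "{X \<in> Pow (R \<union> {n..<n + ?l}). col X} \<subseteq> {X \<in> Pow (S \<union> {n..<n + ?l}). col X}"
    using assms by auto
  then have "\<not> has_copy (C (Suc ?l)) {X \<in> Pow (R \<union> {n..<n + ?l}). col X} (\<subseteq>)"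
    using chain_free_at_chain_free_level has_copy_mono by metis
  then show ?thesis
    unfolding chain_free_level_def[of col n R] by (rule Least_le)
qed

lemma not_col_chain_free_level:
  assumes "S \<subseteq> {..<n}"
  shows "\<not> col (S \<union> {n..<n + chain_free_level col n S})"
proof
  let ?l = "chain_free_level col n S"
  let ?top = "S \<union> {n..<n + ?l}"
  assume blue: "col ?top"
  obtain B where B: "has_copy (C ?l) B (\<subseteq>)" "\<forall>X\<in>B. col X \<and> X \<subset> ?top"
  proof (cases ?l)
    case 0
    have "has_copy (C 0) {} (\<subseteq>)"
      by (simp add: has_copy_def chain_poset_def)
    with 0 show thesis by (intro that[of "{}"]) auto
  next
    case (Suc j)
    have "has_copy (C (Suc j)) {X \<in> Pow (S \<union> {n..<n + j}). col X} (\<subseteq>)"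
      using not_less_Least[of j "\<lambda>i. \<not> has_copy (C (Suc i)) {X \<in> Pow (S \<union> {n..<n + i}). col X} (\<subseteq>)"]
      unfolding Suc[unfolded chain_free_level_def] by blast
    moreover have "S \<union> {n..<n + j} \<subset> ?top"
      using assms Suc by auto
    ultimately show thesis
      using Suc by (intro that) auto
  qed
  then have "has_copy (C (Suc ?l)) (insert ?top B) (\<subseteq>)"
    by (intro has_copy_chain_Suc) auto
  moreover have "insert ?top B \<subseteq> {X \<in> Pow ?top. col X}"
    using B(2) blue by auto
  ultimately have "has_copy (C (Suc ?l)) {X \<in> Pow ?top. col X} (\<subseteq>)"
    by (rule has_copy_mono)
  with chain_free_at_chain_free_level show False ..
qed

end

lemma has_copy_boolean_lattice_if_no_chain:
  assumes no_chain: "\<not> has_copy (C (Suc k)) {S \<in> Pow {..<n + k}. col S} (\<subseteq>)"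
  shows "has_copy (Q n) {S \<in> Pow {..<n + k}. \<not> col S} (\<subseteq>)"
proof -
  let ?f = "\<lambda>S. S \<union> {n..<n + chain_free_level col n S}"
  have chain_free: "\<not> has_copy (C (Suc k)) {X \<in> Pow (S \<union> {n..<n + k}). col X} (\<subseteq>)"
    if "S \<subseteq> {..<n}" for S
  proof -
    have "S \<union> {n..<n + k} \<subseteq> {..<n + k}"
      using that by auto
    then have "{X \<in> Pow (S \<union> {n..<n + k}). col X} \<subseteq> {S \<in> Pow {..<n + k}. col S}"
      by auto
    with no_chain show ?thesis
      using has_copy_mono by blast
  qed
  show ?thesis
  proof (rule has_copy_boolean_latticeI[where f = ?f])
    show "?f ` Pow {..<n} \<subseteq> {S \<in> Pow {..<n + k}. \<not> col S}"
    proof (rule image_subsetI)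
      fix S assume "S \<in> Pow {..<n}"
      then have S: "S \<subseteq> {..<n}" by simp
      with chain_free_level_le[OF chain_free[OF S]] not_col_chain_free_level[OF chain_free[OF S] S]
      show "?f S \<in> {S \<in> Pow {..<n + k}. \<not> col S}"
        by auto
    qed
    show "S \<subseteq> T \<longleftrightarrow> ?f S \<subseteq> ?f T" if "S \<subseteq> {..<n}" "T \<subseteq> {..<n}" for S T
    proof
      assume "S \<subseteq> T"
      with chain_free_level_mono[OF chain_free[OF that(2)] this] show "?f S \<subseteq> ?f T"
        by auto
    next
      assume "?f S \<subseteq> ?f T"
      moreover have "S = ?f S \<inter> {..<n}" "T = ?f T \<inter> {..<n}"
        using that by auto
      ultimately show "S \<subseteq> T" by blast
    qed
  qed
qed

lemma ramsey_prop_chain_boolean_lattice: "ramsey_prop (C (Suc k)) (Q n) (n + k)"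
  unfolding ramsey_prop_iff using has_copy_boolean_lattice_if_no_chain by blast

lemma not_ramsey_prop_chain_boolean_lattice:
  assumes "N < n + k"
  shows "\<not> ramsey_prop (C (Suc k)) (Q n) N"
proof
  assume "ramsey_prop (C (Suc k)) (Q n) N"
  then have "has_copy (C (Suc k)) {S \<in> Pow {..<N}. card S < k} (\<subseteq>)
      \<or> has_copy (Q n) {S \<in> Pow {..<N}. \<not> card S < k} (\<subseteq>)"
    unfolding ramsey_prop_iff by (rule allE)
  then show False
  proof
    assume "has_copy (C (Suc k)) {S \<in> Pow {..<N}. card S < k} (\<subseteq>)"
    then have "Suc k \<le> card {..<k}"
      by (rule has_copy_chain_card_le) (auto intro: finite_subset)
    then show False by simp
  next
    assume "has_copy (Q n) {S \<in> Pow {..<N}. \<not> card S < k} (\<subseteq>)"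
    then have "Suc n \<le> card {k..N}"
      by (rule has_copy_chain_card_le[OF has_copy_boolean_lattice_chain])
        (auto intro: finite_subset dest: card_mono[OF finite_lessThan])
    with assms show False by simp
  qed
qed

lemma ramsey_prop_parallel_chains_boolean_lattice:
  assumes "t \<le> Suc k"
  shows "ramsey_prop (parallel (C (Suc k)) (C t)) (Q n) (n + k + 2)"
  unfolding ramsey_prop_iff
proof
  fix col :: "nat set \<Rightarrow> bool"
  let ?m = "n + k" and ?N = "n + k + 2"
  define B where "B a = insert a ` {S \<in> Pow {..<?m}. col (insert a S)}" for a
  have B_or_red: "has_copy (C (Suc k)) (B a) (\<subseteq>) \<or> has_copy (Q n) {S \<in> Pow {..<?N}. \<not> col S} (\<subseteq>)"
    if "?m \<le> a" "a < ?N" for a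
  proof -
    have "has_copy (C (Suc k)) {S \<in> Pow {..<?m}. col (insert a S)} (\<subseteq>)
        \<or> has_copy (Q n) {S \<in> Pow {..<?m}. \<not> col (insert a S)} (\<subseteq>)"
      using ramsey_prop_chain_boolean_lattice[of k n] unfolding ramsey_prop_iff
      by (rule allE[of _ "\<lambda>S. col (insert a S)"])
    moreover have "\<forall>S\<in>{S \<in> Pow {..<?m}. P S}. a \<notin> S" for P
      using that(1) by auto
    moreover have "insert a ` {S \<in> Pow {..<?m}. \<not> col (insert a S)} \<subseteq> {S \<in> Pow {..<?N}. \<not> col S}"
      using that(2) by auto
    ultimately show ?thesis
      unfolding B_def by (meson has_copy_insert has_copy_mono)
  qed
  show "has_copy (parallel (C (Suc k)) (C t)) {S \<in> Pow {..<?N}. col S} (\<subseteq>)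
      \<or> has_copy (Q n) {S \<in> Pow {..<?N}. \<not> col S} (\<subseteq>)"
  proof (rule disjCI)
    assume "\<not> has_copy (Q n) {S \<in> Pow {..<?N}. \<not> col S} (\<subseteq>)"
    then have "has_copy (C (Suc k)) (B ?m) (\<subseteq>)" "has_copy (C t) (B (Suc ?m)) (\<subseteq>)"
      using B_or_red[of ?m] B_or_red[of "Suc ?m"] has_copy_chain_le[OF _ assms] by auto
    moreover have "\<not> x \<subseteq> y \<and> \<not> y \<subseteq> x" if "x \<in> B ?m" "y \<in> B (Suc ?m)" for x y
      using that by (auto simp: B_def)
    ultimately have "has_copy (parallel (C (Suc k)) (C t)) (B ?m \<union> B (Suc ?m)) (\<subseteq>)"
      by (rule has_copy_parallel)
    moreover have "B ?m \<union> B (Suc ?m) \<subseteq> {S \<in> Pow {..<?N}. col S}"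
      by (auto simp: B_def)
    ultimately show "has_copy (parallel (C (Suc k)) (C t)) {S \<in> Pow {..<?N}. col S} (\<subseteq>)"
      by (rule has_copy_mono)
  qed
qed

lemma not_ramsey_prop_parallel_chains_boolean_lattice:
  assumes "0 < t" and "N < n + k + 2"
  shows "\<not> ramsey_prop (parallel (C (Suc k)) (C t)) (Q n) N"
proof
  let ?blue = "\<lambda>S. card S \<le> k \<or> S = {..<N}"
  let ?B = "{S \<in> Pow {..<N}. ?blue S}" and ?R = "{S \<in> Pow {..<N}. \<not> ?blue S}"
  assume "ramsey_prop (parallel (C (Suc k)) (C t)) (Q n) N"
  then have "has_copy (parallel (C (Suc k)) (C t)) ?B (\<subseteq>) \<or> has_copy (Q n) ?R (\<subseteq>)"
    unfolding ramsey_prop_iff by (rule allE)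
  then show False
  proof
    assume "has_copy (parallel (C (Suc k)) (C t)) ?B (\<subseteq>)"
    moreover have "0 \<in> fst (C t)"
      using assms(1) by (simp add: chain_poset_def)
    ultimately obtain z where z: "z \<in> ?B"
      and chain: "has_copy (C (Suc k)) {x \<in> ?B. \<not> x \<subseteq> z \<and> \<not> z \<subseteq> x} (\<subseteq>)"
      by (rule has_copy_parallel_incomparable)
    have "Suc k \<le> card {1..k}"
    proof (rule has_copy_chain_card_le[OF chain])
      show "\<forall>S\<in>{x \<in> ?B. \<not> x \<subseteq> z \<and> \<not> z \<subseteq> x}. finite S \<and> card S \<in> {1..k}"
      proof
        fix S assume S: "S \<in> {x \<in> ?B. \<not> x \<subseteq> z \<and> \<not> z \<subseteq> x}"
        then have "finite S"
          by (auto intro: finite_subset)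
        moreover have "S \<noteq> {}" "S \<noteq> {..<N}"
          using S z by auto
        ultimately show "finite S \<and> card S \<in> {1..k}"
          using S by (auto simp: Suc_le_eq card_gt_0_iff)
      qed
    qed simp
    then show False by simp
  next
    assume "has_copy (Q n) ?R (\<subseteq>)"
    then have "Suc n \<le> card {Suc k..<N}"
    proof (rule has_copy_chain_card_le[OF has_copy_boolean_lattice_chain])
      show "\<forall>S\<in>?R. finite S \<and> card S \<in> {Suc k..<N}"
        by (auto intro: finite_subset psubset_card_mono[of "{..<N}", simplified])
    qed simp
    with assms(2) show False by simp
  qed
qed

theorem theorem5:
  fixes n t1 t2 :: nat
  assumes "n \<ge> 1" and "t1 \<ge> 1" and "t2 \<ge> 1" and "t1 \<ge> t2"
  shows "poset_ramsey (C t1) (Q n) = n + t1 - 1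
       \<and> poset_ramsey (parallel (C t1) (C t2)) (Q n) = n + t1 + 1"
proof -
  obtain k where t1: "t1 = Suc k"
    using assms(2) by (cases t1) auto
  have "poset_ramsey (C t1) (Q n) = n + k"
    unfolding t1
    by (intro poset_ramsey_eqI ramsey_prop_chain_boolean_lattice not_ramsey_prop_chain_boolean_lattice)
  moreover have "poset_ramsey (parallel (C t1) (C t2)) (Q n) = n + k + 2"
    unfolding t1 using assms(3,4) t1
    by (intro poset_ramsey_eqI ramsey_prop_parallel_chains_boolean_lattice
        not_ramsey_prop_parallel_chains_boolean_lattice) auto
  ultimately show ?thesis
    using t1 by simp
qed

end
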